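(* Let $d\ge 2$ be an integer and let $a_1,\dots,a_d,b_1,\dots,b_d$ be positive real numbers. Then there is a unique pair $(\lambda,f)=(\lambda,f_1,\dots,f_d)\in\mathbb{R}\times C^2([0,1];(0,\infty)^d)$ such that $$\sum_{i=1}^d\left(-\frac{f_i'}{f_i}\sum_{k=1}^d\frac{f_k'}{f_k}+\frac{f_i'^2}{f_i^2}\right)\Bigg|_{r=0}=(d-1)\lambda,$$ $$-\frac{f_i'}{f_i}\sum_{k=1}^d\frac{f_k'}{f_k}+\frac{f_i'^2}{f_i^2}-\frac{f_i''}{f_i}=\lambda\quad\text{on }[0,1],\ i=1,\dots,d,$$ and $f_i(0)=a_i$, $f_i(1)=b_i$ for each $i=1,\dots,d$.
   Context: These are the Einstein equations for a metric $dr\otimes dr+\sum_i f_i(r)^2\,dx_i^2$ on $\mathbb{T}^d\times[0,1]$ with Einstein constant $\lambda$; primes denote derivatives in $r\in[0,1]$. *)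

theory Defs
  imports "HOL-Analysis.Analysis"
begin

text \<open>The index set {1..d} is a finite type 'n with d = CARD('n).
  f1 i and f2 i are the first and second derivatives of f i on [0,1]
  (one-sided at the endpoints, i.e. within [0,1]); f2 i continuous on [0,1]
  makes f i a C^2 function on [0,1].\<close>

definition C2_with_derivs ::
  "(real \<Rightarrow> real) \<Rightarrow> (real \<Rightarrow> real) \<Rightarrow> (real \<Rightarrow> real) \<Rightarrow> bool" where
  "C2_with_derivs g g1 g2 \<longleftrightarrow>
     (\<forall>r\<in>{0..1}. (g has_real_derivative g1 r) (at r within {0..1}) \<and>
                  (g1 has_real_derivative g2 r) (at r within {0..1})) \<and>
     continuous_on {0..1} g2"

definition einstein_sol ::
  "('n::finite \<Rightarrow> real) \<Rightarrow> ('n \<Rightarrow> real) \<Rightarrow> real \<Rightarrow> ('n \<Rightarrow> real \<Rightarrow> real) \<Rightarrow> bool" where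
  "einstein_sol a b lam f \<longleftrightarrow>
     (\<exists>f1 f2.
        (\<forall>i. C2_with_derivs (f i) (f1 i) (f2 i)) \<and>
        (\<forall>i. \<forall>r\<in>{0..1}. f i r > 0) \<and>
        (\<Sum>i\<in>UNIV. - (f1 i 0 / f i 0) * (\<Sum>k\<in>UNIV. f1 k 0 / f k 0) + (f1 i 0 / f i 0)^2)
           = (real CARD('n) - 1) * lam \<and>
        (\<forall>i. \<forall>r\<in>{0..1}.
           - (f1 i r / f i r) * (\<Sum>k\<in>UNIV. f1 k r / f k r) + (f1 i r / f i r)^2
           - f2 i r / f i r = lam) \<and>
        (\<forall>i. f i 0 = a i \<and> f i 1 = b i))"

end

theory Submission
  imports Defs
begin

text \<open>Write \<open>p\<^sub>i = f\<^sub>i' / f\<^sub>i\<close>, \<open>S = \<Sum>\<^sub>i p\<^sub>i\<close> and \<open>V = \<Prod>\<^sub>i f\<^sub>i\<close>. The equations say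
  \<open>p\<^sub>i' = - \<lambda> - p\<^sub>i S\<close>, hence \<open>S' = - d \<lambda> - S\<^sup>2\<close> and \<open>V' = V S\<close>. So the energy
  \<open>V\<^sup>2 (S\<^sup>2 + d \<lambda>)\<close> and the momenta \<open>V (p\<^sub>i - S / d)\<close> are conserved; in the parameter
  \<open>\<integral> 1 / V\<close> each \<open>ln f\<^sub>i - ln V / d\<close> is affine and \<open>1 / V\<close> solves \<open>u'' = E u\<close> with the
  constant energy \<open>E\<close>. The condition at \<open>r = 0\<close> is the Hamiltonian constraint
  \<open>\<Sum>\<^sub>i momentum\<^sub>i\<^sup>2 = (d - 1) / d \<cdot> E\<close>; once the parameter is normalised to \<open>[0,1]\<close> it
  fixes \<open>E\<close> through the boundary data, and the values of \<open>V\<close> at both ends then determine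
  \<open>u\<close>, hence \<open>\<lambda>\<close> and every \<open>f\<^sub>i\<close>. Conversely, these formulas define a solution.\<close>

definition scaled_sinh :: "real \<Rightarrow> real \<Rightarrow> real" where
  "scaled_sinh k x = (if k = 0 then x else sinh (k * x) / k)"

lemma scaled_sinh_0 [simp]: "scaled_sinh k 0 = 0"
  by (simp add: scaled_sinh_def)

lemma scaled_sinh_pos: "k \<ge> 0 \<Longrightarrow> x > 0 \<Longrightarrow> scaled_sinh k x > 0"
  by (auto simp: scaled_sinh_def)

lemma scaled_sinh_nonneg: "k \<ge> 0 \<Longrightarrow> x \<ge> 0 \<Longrightarrow> scaled_sinh k x \<ge> 0"
  by (auto simp: scaled_sinh_def)

lemma has_real_derivative_scaled_sinh:
  "(scaled_sinh k has_real_derivative cosh (k * x)) (at x within s)"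
proof (cases "k = 0")
  case False
  have "((\<lambda>x. sinh (k * x) / k) has_real_derivative cosh (k * x)) (at x within s)"
    by (rule derivative_eq_intros refl | use False in simp)+
  then show ?thesis
    using False unfolding scaled_sinh_def by simp
next
  case True
  then show ?thesis
    unfolding scaled_sinh_def by (auto intro!: derivative_eq_intros)
qed

lemma has_real_derivative_cosh_scaled:
  "((\<lambda>x. cosh (k * x)) has_real_derivative k\<^sup>2 * scaled_sinh k x) (at x within s)"
proof -
  have "((\<lambda>x. cosh (k * x)) has_real_derivative sinh (k * x) * (k * 1)) (at x within s)"
    by (rule derivative_eq_intros refl)+ simp
  then show ?thesis
    by (cases "k = 0") (auto simp: scaled_sinh_def power2_eq_square mult.commute)
qed

lemma cosh_scaled_sinh_square: "(cosh (k * x))\<^sup>2 - k\<^sup>2 * (scaled_sinh k x)\<^sup>2 = 1"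
  by (cases "k = 0") (auto simp: scaled_sinh_def cosh_square_eq power_divide)

lemma scaled_sinh_diff:
  "cosh (k * x) * scaled_sinh k 1 - cosh k * scaled_sinh k x = scaled_sinh k (1 - x)"
proof (cases "k = 0")
  case False
  have "sinh (k - k * x) = sinh k * cosh (k * x) - cosh k * sinh (k * x)"
    by (simp add: sinh_diff)
  then show ?thesis
    using False by (simp add: scaled_sinh_def field_simps right_diff_distrib)
qed (simp add: scaled_sinh_def)

definition Psi :: "real \<Rightarrow> real \<Rightarrow> real \<Rightarrow> real \<Rightarrow> real" where
  "Psi k \<alpha> \<beta> x = \<alpha> * cosh (k * x) + \<beta> * scaled_sinh k x"

definition dPsi :: "real \<Rightarrow> real \<Rightarrow> real \<Rightarrow> real \<Rightarrow> real" where
  "dPsi k \<alpha> \<beta> x = \<alpha> * k\<^sup>2 * scaled_sinh k x + \<beta> * cosh (k * x)"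

lemma Psi_0 [simp]: "Psi k \<alpha> \<beta> 0 = \<alpha>" "dPsi k \<alpha> \<beta> 0 = \<beta>"
  by (simp_all add: Psi_def dPsi_def)

lemma has_real_derivative_Psi: "(Psi k \<alpha> \<beta> has_real_derivative dPsi k \<alpha> \<beta> x) (at x within s)"
proof -
  have "((\<lambda>x. \<alpha> * cosh (k * x) + \<beta> * scaled_sinh k x) has_real_derivative
      \<alpha> * (k\<^sup>2 * scaled_sinh k x) + \<beta> * cosh (k * x)) (at x within s)"
    by (intro DERIV_add DERIV_cmult has_real_derivative_cosh_scaled has_real_derivative_scaled_sinh)
  then show ?thesis
    unfolding Psi_def dPsi_def by (simp add: algebra_simps)
qed

lemma has_real_derivative_dPsi: "(dPsi k \<alpha> \<beta> has_real_derivative k\<^sup>2 * Psi k \<alpha> \<beta> x) (at x within s)"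
proof -
  have "((\<lambda>x. \<alpha> * k\<^sup>2 * scaled_sinh k x + \<beta> * cosh (k * x)) has_real_derivative
      \<alpha> * k\<^sup>2 * cosh (k * x) + \<beta> * (k\<^sup>2 * scaled_sinh k x)) (at x within s)"
    by (intro DERIV_add DERIV_cmult has_real_derivative_cosh_scaled has_real_derivative_scaled_sinh)
  then show ?thesis
    unfolding Psi_def dPsi_def by (simp add: algebra_simps)
qed

lemma Psi_energy: "k\<^sup>2 * (Psi k \<alpha> \<beta> x)\<^sup>2 - (dPsi k \<alpha> \<beta> x)\<^sup>2 = k\<^sup>2 * \<alpha>\<^sup>2 - \<beta>\<^sup>2"
proof -
  have "k\<^sup>2 * (Psi k \<alpha> \<beta> x)\<^sup>2 - (dPsi k \<alpha> \<beta> x)\<^sup>2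
      = (k\<^sup>2 * \<alpha>\<^sup>2 - \<beta>\<^sup>2) * ((cosh (k * x))\<^sup>2 - k\<^sup>2 * (scaled_sinh k x)\<^sup>2)"
    unfolding Psi_def dPsi_def by (simp add: power2_eq_square algebra_simps)
  then show ?thesis
    by (simp add: cosh_scaled_sinh_square)
qed

lemma continuous_on_Psi [continuous_intros]: "continuous_on s (Psi k \<alpha> \<beta>)"
  by (rule DERIV_continuous_on[OF has_real_derivative_Psi])

lemma continuous_on_dPsi [continuous_intros]: "continuous_on s (dPsi k \<alpha> \<beta>)"
  by (rule DERIV_continuous_on[OF has_real_derivative_dPsi])

lemma DERIV_pos_imp_less_within_Icc:
  fixes f D :: "real \<Rightarrow> real"
  assumes der: "\<And>x. x \<in> {a..b} \<Longrightarrow> (f has_real_derivative D x) (at x within {a..b})"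
    and pos: "\<And>x. x \<in> {a..b} \<Longrightarrow> D x > 0"
    and xy: "a \<le> x" "x < y" "y \<le> b"
  shows "f x < f y"
proof (rule DERIV_pos_imp_increasing_open[OF xy(2)])
  fix z assume z: "x < z" "z < y"
  then have "at z within {a..b} = at z"
    using xy by (intro at_within_Icc_at) auto
  then show "\<exists>y. DERIV f z :> y \<and> y > 0"
    using der[of z] pos[of z] z xy by auto
next
  have "continuous_on {a..b} f"
    by (rule DERIV_continuous_on[OF der])
  then show "continuous_on {x..y} f"
    by (rule continuous_on_subset) (use xy in auto)
qed

lemma DERIV_zero_imp_eq_within_Icc:
  fixes f :: "real \<Rightarrow> real"
  assumes "\<And>x. x \<in> {a..b} \<Longrightarrow> (f has_real_derivative 0) (at x within {a..b})"
    and "x \<in> {a..b}" "y \<in> {a..b}"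
  shows "f x = f y"
proof -
  obtain C where "\<And>x. x \<in> {a..b} \<Longrightarrow> f x = C"
    using has_field_derivative_zero_constant[OF convex_real_interval(5) assms(1)] by blast
  then show ?thesis
    using assms(2,3) by simp
qed

locale normalized_primitive =
  fixes w :: "real \<Rightarrow> real"
  assumes continuous_w: "continuous_on {0..1} w"
    and w_pos: "\<And>x. x \<in> {0..1} \<Longrightarrow> w x > 0"
begin

definition I :: "real \<Rightarrow> real" where
  "I x = integral {0..x} w"

definition c :: real where
  "c = I 1"

definition t :: "real \<Rightarrow> real" where
  "t r = (SOME x. x \<in> {0..1} \<and> I x = c * r)"

lemma has_real_derivative_I: "x \<in> {0..1} \<Longrightarrow> (I has_real_derivative w x) (at x within {0..1})"
  unfolding I_def[abs_def] by (rule integral_has_real_derivative[OF continuous_w])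

lemma continuous_on_I: "continuous_on {0..1} I"
  by (rule DERIV_continuous_on[OF has_real_derivative_I])

lemma I_0 [simp]: "I 0 = 0"
  by (simp add: I_def)

lemma I_less: "0 \<le> x \<Longrightarrow> x < y \<Longrightarrow> y \<le> 1 \<Longrightarrow> I x < I y"
  by (rule DERIV_pos_imp_less_within_Icc[OF has_real_derivative_I w_pos])

lemma c_pos: "c > 0"
  using I_less[of 0 1] by (simp add: c_def)

lemma I_inj: "x \<in> {0..1} \<Longrightarrow> y \<in> {0..1} \<Longrightarrow> I x = I y \<Longrightarrow> x = y"
  by (metis I_less atLeastAtMost_iff linorder_neq_iff less_irrefl)

lemma I_bounds: "x \<in> {0..1} \<Longrightarrow> 0 \<le> I x \<and> I x \<le> c"
  using I_less[of 0 x] I_less[of x 1] by (cases "x = 0"; cases "x = 1") (auto simp: c_def)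

lemma t_in_Icc_and_I_t: "r \<in> {0..1} \<Longrightarrow> t r \<in> {0..1} \<and> I (t r) = c * r"
proof -
  assume r: "r \<in> {0..1}"
  have "\<exists>x. 0 \<le> x \<and> x \<le> 1 \<and> I x = c * r"
    by (rule IVT'[OF _ _ _ continuous_on_I]) (use r c_pos in \<open>auto simp: c_def\<close>)
  then show ?thesis
    unfolding t_def by (metis (mono_tags, lifting) atLeastAtMost_iff someI_ex)
qed

lemma t_eqI: "r \<in> {0..1} \<Longrightarrow> x \<in> {0..1} \<Longrightarrow> I x = c * r \<Longrightarrow> t r = x"
  using t_in_Icc_and_I_t I_inj by metis

lemma t_0 [simp]: "t 0 = 0"
  by (rule t_eqI) auto

lemma t_1 [simp]: "t 1 = 1"
  by (rule t_eqI) (auto simp: c_def)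

lemma t_I: "x \<in> {0..1} \<Longrightarrow> t (I x / c) = x"
  by (rule t_eqI) (use I_bounds c_pos in auto)

lemma image_I_div_c: "(\<lambda>x. I x / c) ` {0..1} = {0..1}"
proof
  show "(\<lambda>x. I x / c) ` {0..1} \<subseteq> {0..1}"
    using I_bounds c_pos by auto
  show "{0..1} \<subseteq> (\<lambda>x. I x / c) ` {0..1}"
  proof
    fix r :: real assume r: "r \<in> {0..1}"
    then have "r = I (t r) / c"
      using t_in_Icc_and_I_t c_pos by simp
    then show "r \<in> (\<lambda>x. I x / c) ` {0..1}"
      using t_in_Icc_and_I_t[OF r] by blast
  qed
qed

lemma continuous_on_t: "continuous_on {0..1} t"
proof -
  have "continuous_on {0..1} (\<lambda>x. I x / c)"
    using c_pos by (intro continuous_intros continuous_on_I) auto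
  then have "continuous_on ((\<lambda>x. I x / c) ` {0..1}) t"
    by (rule continuous_on_inv) (auto simp: t_I)
  then show ?thesis
    by (simp add: image_I_div_c)
qed

lemma has_real_derivative_t:
  assumes r: "r \<in> {0..1}"
  shows "(t has_real_derivative c / w (t r)) (at r within {0..1})"
proof -
  define x where "x = t r"
  have x: "x \<in> {0..1}" "I x / c = r"
    using t_in_Icc_and_I_t[OF r] c_pos by (auto simp: x_def)
  have "((\<lambda>x. I x / c) has_real_derivative w x / c) (at x within {0..1})"
    by (intro DERIV_cdivide has_real_derivative_I x)
  then have "((\<lambda>x. I x / c) has_derivative (*) (w x / c)) (at x within {0..1})"
    by (simp add: has_field_derivative_def)
  moreover have "continuous (at (I x / c) within (\<lambda>x. I x / c) ` {0..1}) t"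
    using continuous_on_t r x by (simp add: image_I_div_c continuous_on_eq_continuous_within)
  ultimately have "(t has_derivative (*) (c / w x)) (at (I x / c) within (\<lambda>x. I x / c) ` {0..1})"
    by (rule has_derivative_inverse_within[OF _ _ x(1)])
      (use w_pos[OF x(1)] c_pos in \<open>auto simp: t_I fun_eq_iff intro: linear_times\<close>)
  then show ?thesis
    using x by (simp add: has_field_derivative_def image_I_div_c x_def mult.commute)
qed

lemma ode_solution_eq_t:
  assumes maps: "\<And>r. r \<in> {0..1} \<Longrightarrow> \<phi> r \<in> {0..1}"
    and bdry: "\<phi> 0 = 0" "\<phi> 1 = 1"
    and der: "\<And>r. r \<in> {0..1} \<Longrightarrow> (\<phi> has_real_derivative C / w (\<phi> r)) (at r within {0..1})"
  shows "C = c \<and> (\<forall>r\<in>{0..1}. \<phi> r = t r)"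
proof -
  have "((\<lambda>r. I (\<phi> r) - C * r) has_real_derivative 0) (at r within {0..1})"
    if r: "r \<in> {0..1}" for r
  proof -
    have "(I has_derivative (*) (w (\<phi> r))) (at (\<phi> r) within \<phi> ` {0..1})"
      using has_real_derivative_I[OF maps[OF r]] maps
      by (auto simp: has_field_derivative_def intro: has_derivative_subset)
    then have "((I \<circ> \<phi>) has_derivative (*) (w (\<phi> r)) \<circ> (*) (C / w (\<phi> r))) (at r within {0..1})"
      using der[OF r] by (intro diff_chain_within) (auto simp: has_field_derivative_def)
    moreover have "(*) (w (\<phi> r)) \<circ> (*) (C / w (\<phi> r)) = (*) C"
      using w_pos[OF maps[OF r]] by (auto simp: fun_eq_iff)
    ultimately have "((\<lambda>r. I (\<phi> r)) has_real_derivative C) (at r within {0..1})"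
      by (simp add: has_field_derivative_def o_def)
    then show ?thesis
      by (rule DERIV_cong[OF DERIV_diff[OF _ DERIV_cmult[OF DERIV_ident]]]) simp
  qed
  then have I_\<phi>: "I (\<phi> r) = C * r" if "r \<in> {0..1}" for r
    using DERIV_zero_imp_eq_within_Icc[of 0 1 "\<lambda>r. I (\<phi> r) - C * r" r 0] that bdry by simp
  have "C = c"
    using I_\<phi>[of 1] bdry by (simp add: c_def)
  moreover have "\<phi> r = t r" if "r \<in> {0..1}" for r
    using I_\<phi>[OF that] maps[OF that] that \<open>C = c\<close> by (intro t_eqI[symmetric]) auto
  ultimately show ?thesis
    by blast
qed

end

locale einstein_system =
  fixes g g1 g2 :: "'n::finite \<Rightarrow> real \<Rightarrow> real" and lam :: real
  assumes C2: "\<And>i. C2_with_derivs (g i) (g1 i) (g2 i)"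
    and g_pos: "\<And>i r. r \<in> {0..1} \<Longrightarrow> g i r > 0"
    and ode: "\<And>i r. r \<in> {0..1} \<Longrightarrow>
      - (g1 i r / g i r) * (\<Sum>k\<in>UNIV. g1 k r / g k r) + (g1 i r / g i r)\<^sup>2 - g2 i r / g i r = lam"
begin

definition d :: real where
  "d = real CARD('n)"

definition logd :: "'n \<Rightarrow> real \<Rightarrow> real" where
  "logd i r = g1 i r / g i r"

definition mean_curv :: "real \<Rightarrow> real" where
  "mean_curv r = (\<Sum>i\<in>UNIV. logd i r)"

definition vol :: "real \<Rightarrow> real" where
  "vol r = exp (\<Sum>i\<in>UNIV. ln (g i r))"

definition energy :: "real \<Rightarrow> real" where
  "energy r = (vol r)\<^sup>2 * ((mean_curv r)\<^sup>2 + d * lam)"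

definition momentum :: "'n \<Rightarrow> real \<Rightarrow> real" where
  "momentum i r = vol r * (logd i r - mean_curv r / d)"

lemma vol_pos: "vol r > 0"
  by (simp add: vol_def)

lemma has_real_derivative_g:
  "r \<in> {0..1} \<Longrightarrow> (g i has_real_derivative g1 i r) (at r within {0..1})"
  and has_real_derivative_g1:
  "r \<in> {0..1} \<Longrightarrow> (g1 i has_real_derivative g2 i r) (at r within {0..1})"
  using C2 unfolding C2_with_derivs_def by blast+

lemma has_real_derivative_ln_g:
  "r \<in> {0..1} \<Longrightarrow> ((\<lambda>r. ln (g i r)) has_real_derivative logd i r) (at r within {0..1})"
  using DERIV_chain2[OF DERIV_ln_divide[OF g_pos] has_real_derivative_g] by (simp add: logd_def)

lemma d_pos: "d > 0"
  by (simp add: d_def)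

lemma has_real_derivative_logd:
  assumes r: "r \<in> {0..1}"
  shows "(logd i has_real_derivative - lam - logd i r * mean_curv r) (at r within {0..1})"
proof -
  have gz: "g i r \<noteq> 0"
    using g_pos[OF r] by (metis less_irrefl)
  have "((\<lambda>r. g1 i r / g i r) has_real_derivative
      (g2 i r * g i r - g1 i r * g1 i r) / (g i r * g i r)) (at r within {0..1})"
    by (rule DERIV_divide[OF has_real_derivative_g1[OF r] has_real_derivative_g[OF r] gz])
  moreover have "(g2 i r * g i r - g1 i r * g1 i r) / (g i r * g i r) = g2 i r / g i r - (logd i r)\<^sup>2"
    using gz by (simp add: logd_def field_simps power2_eq_square)
  moreover have "g2 i r / g i r = - lam - logd i r * mean_curv r + (logd i r)\<^sup>2"
    using ode[OF r, of i] unfolding logd_def mean_curv_def by linarith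
  ultimately show ?thesis
    by (simp add: logd_def[abs_def])
qed

lemma has_real_derivative_mean_curv:
  assumes r: "r \<in> {0..1}"
  shows "(mean_curv has_real_derivative - d * lam - (mean_curv r)\<^sup>2) (at r within {0..1})"
proof -
  have "((\<lambda>r. \<Sum>i\<in>UNIV. logd i r) has_real_derivative (\<Sum>i\<in>UNIV. - lam - logd i r * mean_curv r))
      (at r within {0..1})"
    by (rule DERIV_sum) (rule has_real_derivative_logd[OF r])
  moreover have "(\<Sum>i\<in>UNIV. - lam - logd i r * mean_curv r) = - d * lam - (mean_curv r)\<^sup>2"
    by (simp add: sum_subtractf d_def mean_curv_def power2_eq_square sum_distrib_right)
  moreover have "mean_curv = (\<lambda>r. \<Sum>i\<in>UNIV. logd i r)"
    by (simp add: fun_eq_iff mean_curv_def)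
  ultimately show ?thesis
    by simp
qed

lemma has_real_derivative_ln_vol:
  "r \<in> {0..1} \<Longrightarrow> ((\<lambda>r. ln (vol r)) has_real_derivative mean_curv r) (at r within {0..1})"
  unfolding vol_def mean_curv_def ln_exp by (intro DERIV_sum has_real_derivative_ln_g)

lemma has_real_derivative_vol:
  "r \<in> {0..1} \<Longrightarrow> (vol has_real_derivative vol r * mean_curv r) (at r within {0..1})"
  using DERIV_chain2[OF DERIV_exp has_real_derivative_ln_vol] by (simp add: vol_pos)

lemma energy_const: "r \<in> {0..1} \<Longrightarrow> energy r = energy 0"
proof (rule DERIV_zero_imp_eq_within_Icc[of 0 1 energy])
  fix r :: real assume r: "r \<in> {0..1}"
  have "((\<lambda>r. (vol r * vol r) * (mean_curv r * mean_curv r + d * lam)) has_real_derivative 0)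
      (at r within {0..1})"
    by (rule DERIV_cong[OF DERIV_mult[OF DERIV_mult[OF has_real_derivative_vol has_real_derivative_vol]
          DERIV_add[OF DERIV_mult[OF has_real_derivative_mean_curv has_real_derivative_mean_curv]
            DERIV_const]]])
      (use r in \<open>simp_all add: algebra_simps power2_eq_square\<close>)
  then show "(energy has_real_derivative 0) (at r within {0..1})"
    by (simp add: energy_def[abs_def] power2_eq_square)
qed auto

lemma momentum_const: "r \<in> {0..1} \<Longrightarrow> momentum i r = momentum i 0"
proof (rule DERIV_zero_imp_eq_within_Icc[of 0 1 "momentum i"])
  fix r :: real assume r: "r \<in> {0..1}"
  show "(momentum i has_real_derivative 0) (at r within {0..1})"
    unfolding momentum_def[abs_def]
    by (rule DERIV_cong[OF DERIV_mult[OF has_real_derivative_vol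
          DERIV_diff[OF has_real_derivative_logd DERIV_cdivide[OF has_real_derivative_mean_curv]]]])
      (use r d_pos in \<open>simp_all add: field_simps power2_eq_square\<close>)
qed auto

sublocale vol: normalized_primitive "\<lambda>r. 1 / vol r"
proof
  show "continuous_on {0..1} (\<lambda>r. 1 / vol r)"
    using DERIV_continuous_on[OF has_real_derivative_vol] vol_pos
    by (intro continuous_intros) (auto simp: less_imp_neq[symmetric])
qed (simp add: vol_pos)

lemma ln_g_eq:
  assumes r: "r \<in> {0..1}"
  shows "ln (g i r) = ln (g i 0) + (ln (vol r) - ln (vol 0)) / d + momentum i 0 * vol.I r"
proof -
  have "((\<lambda>r. ln (g i r) - ln (vol r) / d - momentum i 0 * vol.I r) has_real_derivative 0)
      (at r within {0..1})" if r: "r \<in> {0..1}" for r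
    by (rule DERIV_cong[OF DERIV_diff[OF DERIV_diff[OF has_real_derivative_ln_g
          DERIV_cdivide[OF has_real_derivative_ln_vol]] DERIV_cmult[OF vol.has_real_derivative_I]]])
      (use r momentum_const[OF r, of i] vol_pos[of r] in \<open>simp_all add: momentum_def field_simps\<close>)
  from DERIV_zero_imp_eq_within_Icc[of 0 1, OF this r, of 0] show ?thesis
    by (simp add: diff_divide_distrib)
qed

lemma hamiltonian_constraint:
  assumes "(\<Sum>i\<in>UNIV. - logd i 0 * mean_curv 0 + (logd i 0)\<^sup>2) = (d - 1) * lam"
  shows "(\<Sum>i\<in>UNIV. (momentum i 0)\<^sup>2) = (d - 1) / d * energy 0"
proof -
  let ?V = "vol 0" and ?S = "mean_curv 0"
  have "(\<Sum>i\<in>UNIV. - logd i 0 * ?S + (logd i 0)\<^sup>2) = - ?S * ?S + (\<Sum>i\<in>UNIV. (logd i 0)\<^sup>2)"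
    by (simp add: sum.distrib mean_curv_def sum_distrib_right sum_subtractf)
  then have sum_logd_sq: "(\<Sum>i\<in>UNIV. (logd i 0)\<^sup>2) = (d - 1) * lam + ?S\<^sup>2"
    using assms by (simp add: power2_eq_square)
  have "(\<Sum>i\<in>UNIV. (momentum i 0)\<^sup>2)
      = (\<Sum>i\<in>UNIV. ?V\<^sup>2 * (logd i 0)\<^sup>2 - (2 * ?V\<^sup>2 * ?S / d) * logd i 0 + ?V\<^sup>2 * ?S\<^sup>2 / d\<^sup>2)"
    using d_pos by (intro sum.cong) (auto simp: momentum_def power2_eq_square field_simps)
  also have "\<dots> = ?V\<^sup>2 * (\<Sum>i\<in>UNIV. (logd i 0)\<^sup>2) - (2 * ?V\<^sup>2 * ?S / d) * ?S + d * (?V\<^sup>2 * ?S\<^sup>2 / d\<^sup>2)"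
    by (simp add: sum.distrib sum_subtractf sum_distrib_left mean_curv_def d_def)
  also have "\<dots> = ?V\<^sup>2 * ((d - 1) * lam + ?S\<^sup>2 - ?S\<^sup>2 / d)"
    unfolding sum_logd_sq using d_pos by (simp add: power2_eq_square field_simps)
  also have "\<dots> = (d - 1) / d * energy 0"
    using d_pos by (simp add: energy_def field_simps)
  finally show ?thesis .
qed

lemma has_real_derivative_vol_param:
  "r \<in> {0..1} \<Longrightarrow> ((\<lambda>r. vol.I r / vol.c) has_real_derivative 1 / (vol.c * vol r)) (at r within {0..1})"
  using DERIV_cdivide[OF vol.has_real_derivative_I, of r vol.c] by (simp add: mult.commute)

lemma has_real_derivative_inverse_vol:
  assumes "r \<in> {0..1}"
  shows "((\<lambda>r. 1 / (vol.c * vol r)) has_real_derivative - mean_curv r * (1 / (vol.c * vol r)))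
    (at r within {0..1})"
  using vol_pos[of r] vol.c_pos
  by (intro DERIV_cong[OF DERIV_divide[OF DERIV_const DERIV_cmult[OF has_real_derivative_vol[OF assms]]]])
    (auto simp: field_simps power2_eq_square)

lemma vol_times_Psi:
  assumes k: "k\<^sup>2 = vol.c\<^sup>2 * energy 0" and r: "r \<in> {0..1}"
  shows "vol r * Psi k (1 / vol 0) (- vol.c * mean_curv 0) (vol.I r / vol.c) = 1"
proof -
  define \<psi> where "\<psi> r = Psi k (1 / vol 0) (- vol.c * mean_curv 0) (vol.I r / vol.c)" for r
  define \<psi>1 where "\<psi>1 r = dPsi k (1 / vol 0) (- vol.c * mean_curv 0) (vol.I r / vol.c)" for r
  have d\<psi>: "(\<psi> has_real_derivative \<psi>1 r * (1 / (vol.c * vol r))) (at r within {0..1})"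
    and d\<psi>1: "(\<psi>1 has_real_derivative k\<^sup>2 * \<psi> r * (1 / (vol.c * vol r))) (at r within {0..1})"
    if "r \<in> {0..1}" for r
    unfolding \<psi>_def[abs_def] \<psi>1_def[abs_def]
    by (rule DERIV_chain2[OF has_real_derivative_Psi has_real_derivative_vol_param[OF that]],
        rule DERIV_chain2[OF has_real_derivative_dPsi has_real_derivative_vol_param[OF that]])
  text \<open>The left-hand side is \<open>(vol \<psi>)' / vol\<close>. Since \<open>k\<^sup>2\<close> is the energy, it solves
    a homogeneous linear ODE, and it vanishes at \<open>0\<close>.\<close>
  have d_vol_\<psi>: "mean_curv r * \<psi> r + \<psi>1 r * (1 / (vol.c * vol r)) = 0" if r: "r \<in> {0..1}" for r
  proof -
    have "((\<lambda>r. mean_curv r * \<psi> r + \<psi>1 r * (1 / (vol.c * vol r))) has_real_derivative 0)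
        (at r within {0..1})" if r: "r \<in> {0..1}" for r
    proof -
      have "k\<^sup>2 = vol.c\<^sup>2 * (vol r)\<^sup>2 * ((mean_curv r)\<^sup>2 + d * lam)"
        using k energy_const[OF r] by (simp add: energy_def)
      then show ?thesis
        using vol_pos[of r] vol.c_pos
        by (intro DERIV_cong[OF DERIV_add[OF DERIV_mult[OF has_real_derivative_mean_curv[OF r] d\<psi>[OF r]]
              DERIV_mult[OF d\<psi>1[OF r] has_real_derivative_inverse_vol[OF r]]]])
          (auto simp: field_simps power2_eq_square)
    qed
    from DERIV_zero_imp_eq_within_Icc[of 0 1, OF this r, of 0] show ?thesis
      using vol_pos[of 0] vol.c_pos by (simp add: \<psi>_def \<psi>1_def)
  qed
  have "((\<lambda>r. vol r * \<psi> r) has_real_derivative 0) (at r within {0..1})" if r: "r \<in> {0..1}" for r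
    using d_vol_\<psi>[OF r] vol_pos[of r] vol.c_pos
    by (intro DERIV_cong[OF DERIV_mult[OF has_real_derivative_vol[OF r] d\<psi>[OF r]]])
      (auto simp: field_simps)
  from DERIV_zero_imp_eq_within_Icc[of 0 1, OF this r, of 0] show ?thesis
    using vol_pos[of 0] by (simp add: \<psi>_def)
qed

end

locale boundary_data =
  fixes a b :: "'n::finite \<Rightarrow> real"
  assumes card_ge_2: "CARD('n) \<ge> 2" and a_pos: "\<And>i. a i > 0" and b_pos: "\<And>i. b i > 0"
begin

definition d :: real where
  "d = real CARD('n)"

definition lnA :: real where
  "lnA = (\<Sum>i\<in>UNIV. ln (a i))"

definition lnB :: real where
  "lnB = (\<Sum>i\<in>UNIV. ln (b i))"

definition l :: "'n \<Rightarrow> real" where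
  "l i = ln (b i) - ln (a i) - (lnB - lnA) / d"

text \<open>\<open>Psi k al be\<close> is \<open>1 / vol\<close> as a function of the normalized parameter
  \<open>\<integral> 1 / vol\<close>: \<open>k\<^sup>2\<close> is the energy in that parameter, fixed by the Hamiltonian constraint
  since the momenta become the \<open>l i\<close>, and \<open>al\<close>, \<open>be\<close> make \<open>vol\<close> equal to \<open>\<Prod>i. a i\<close> at \<open>0\<close>
  and to \<open>\<Prod>i. b i\<close> at \<open>1\<close>.\<close>

definition k :: real where
  "k = sqrt (d / (d - 1) * (\<Sum>i\<in>UNIV. (l i)\<^sup>2))"

definition al :: real where
  "al = exp (- lnA)"

definition be :: real where
  "be = (exp (- lnB) - cosh k * al) / scaled_sinh k 1"

abbreviation Ps :: "real \<Rightarrow> real" where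
  "Ps \<equiv> Psi k al be"

abbreviation dPs :: "real \<Rightarrow> real" where
  "dPs \<equiv> dPsi k al be"

lemma d_gt_1: "d > 1"
  using card_ge_2 by (simp add: d_def)

lemma sum_l: "(\<Sum>i\<in>UNIV. l i) = 0"
  using d_gt_1 by (simp add: l_def sum_subtractf lnA_def lnB_def d_def)

lemma k_square: "k\<^sup>2 = d / (d - 1) * (\<Sum>i\<in>UNIV. (l i)\<^sup>2)"
proof -
  have "0 \<le> d / (d - 1) * (\<Sum>i\<in>UNIV. (l i)\<^sup>2)"
    using d_gt_1 by (intro mult_nonneg_nonneg sum_nonneg) auto
  then show ?thesis
    by (simp add: k_def)
qed

lemma k_nonneg: "k \<ge> 0"
  unfolding k_def using d_gt_1 by (intro real_sqrt_ge_zero mult_nonneg_nonneg sum_nonneg) auto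

lemma sum_l_square: "(\<Sum>i\<in>UNIV. (l i)\<^sup>2) = (d - 1) / d * k\<^sup>2"
  using d_gt_1 by (simp add: k_square)

lemma scaled_sinh_k_1_pos: "scaled_sinh k 1 > 0"
  using scaled_sinh_pos[OF k_nonneg] by simp

lemma Ps_1: "Ps 1 = exp (- lnB)"
  using scaled_sinh_k_1_pos by (simp add: Psi_def be_def)

text \<open>On \<open>[0,1]\<close>, \<open>Ps\<close> is a positive combination of \<open>scaled_sinh k (1 - \<tau>)\<close> and
  \<open>scaled_sinh k \<tau>\<close>.\<close>

lemma Ps_pos:
  assumes "\<tau> \<in> {0..1}"
  shows "Ps \<tau> > 0"
proof -
  have "Ps \<tau> * scaled_sinh k 1 = al * scaled_sinh k (1 - \<tau>) + exp (- lnB) * scaled_sinh k \<tau>"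
    using scaled_sinh_diff[of k \<tau>] scaled_sinh_k_1_pos unfolding Psi_def be_def
    by (simp add: field_simps)
  moreover have "al * scaled_sinh k (1 - \<tau>) + exp (- lnB) * scaled_sinh k \<tau> > 0"
  proof (cases "\<tau> = 1")
    case False
    then have "scaled_sinh k (1 - \<tau>) > 0" "scaled_sinh k \<tau> \<ge> 0"
      using assms k_nonneg by (auto intro: scaled_sinh_pos scaled_sinh_nonneg)
    then show ?thesis
      by (simp add: al_def add_pos_nonneg)
  qed (simp add: al_def scaled_sinh_k_1_pos)
  ultimately show ?thesis
    using scaled_sinh_k_1_pos by (metis zero_less_mult_pos2)
qed

sublocale psi: normalized_primitive "\<lambda>\<tau>. 1 / Ps \<tau>"
  by unfold_locales (use Ps_pos in \<open>auto intro!: continuous_intros simp: less_imp_neq[symmetric]\<close>)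

abbreviation t :: "real \<Rightarrow> real" where
  "t \<equiv> psi.t"

abbreviation c :: real where
  "c \<equiv> psi.c"

lemma t_in_Icc: "r \<in> {0..1} \<Longrightarrow> t r \<in> {0..1}"
  using psi.t_in_Icc_and_I_t by blast

lemma has_real_derivative_t:
  "r \<in> {0..1} \<Longrightarrow> (t has_real_derivative c * Ps (t r)) (at r within {0..1})"
  using psi.has_real_derivative_t by simp

text \<open>\<open>F i\<close> is \<open>f i\<close> in the normalized parameter, where \<open>ln (f i) - ln vol / d\<close> is affine.\<close>

definition F :: "'n \<Rightarrow> real \<Rightarrow> real" where
  "F i \<tau> = a i * exp (l i * \<tau> - (lnA + ln (Ps \<tau>)) / d)"

definition P :: "'n \<Rightarrow> real \<Rightarrow> real" where
  "P i \<tau> = l i * Ps \<tau> - dPs \<tau> / d"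

definition dP :: "'n \<Rightarrow> real \<Rightarrow> real" where
  "dP i \<tau> = l i * dPs \<tau> - k\<^sup>2 * Ps \<tau> / d"

lemma F_pos: "F i \<tau> > 0"
  using a_pos by (simp add: F_def)

lemma has_real_derivative_F:
  assumes "\<tau> \<in> {0..1}"
  shows "(F i has_real_derivative F i \<tau> * P i \<tau> / Ps \<tau>) (at \<tau>)"
proof -
  have p: "Ps \<tau> > 0"
    using Ps_pos assms by auto
  have "((\<lambda>x. ln (Ps x)) has_real_derivative 1 / Ps \<tau> * dPs \<tau>) (at \<tau>)"
    by (rule DERIV_chain2[OF DERIV_ln_divide[OF p] has_real_derivative_Psi])
  then have "((\<lambda>x. l i * x - (lnA + ln (Ps x)) / d) has_real_derivative
      l i * 1 - (0 + 1 / Ps \<tau> * dPs \<tau>) / d) (at \<tau>)"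
    by (intro DERIV_diff DERIV_cmult DERIV_ident DERIV_cdivide DERIV_add DERIV_const)
  from DERIV_cmult[OF DERIV_fun_exp[OF this], of "a i"] show ?thesis
    using p d_gt_1 by (simp add: F_def[abs_def] P_def field_simps)
qed

lemma continuous_on_F: "continuous_on {0..1} (F i)"
  by (rule DERIV_continuous_on[OF has_field_derivative_at_within[OF has_real_derivative_F]])

lemma has_real_derivative_P: "(P i has_real_derivative dP i \<tau>) (at \<tau>)"
  unfolding P_def[abs_def] dP_def
  by (rule DERIV_diff[OF DERIV_cmult[OF has_real_derivative_Psi] DERIV_cdivide[OF has_real_derivative_dPsi]])

lemma sum_P: "(\<Sum>i\<in>UNIV. P i \<tau>) = - dPs \<tau>"
  using sum_l d_gt_1 by (simp add: P_def sum_subtractf flip: sum_distrib_right) (simp add: d_def)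

lemma sum_P_square: "(\<Sum>i\<in>UNIV. (P i \<tau>)\<^sup>2) = (Ps \<tau>)\<^sup>2 * (\<Sum>i\<in>UNIV. (l i)\<^sup>2) + (dPs \<tau>)\<^sup>2 / d"
proof -
  have "(\<Sum>i\<in>UNIV. (P i \<tau>)\<^sup>2)
      = (\<Sum>i\<in>UNIV. (Ps \<tau>)\<^sup>2 * (l i)\<^sup>2 - (2 * Ps \<tau> * dPs \<tau> / d) * l i + (dPs \<tau>)\<^sup>2 / d\<^sup>2)"
    using d_gt_1 by (intro sum.cong) (auto simp: P_def power2_eq_square field_simps)
  also have "\<dots> = (Ps \<tau>)\<^sup>2 * (\<Sum>i\<in>UNIV. (l i)\<^sup>2) - (2 * Ps \<tau> * dPs \<tau> / d) * (\<Sum>i\<in>UNIV. l i)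
      + d * ((dPs \<tau>)\<^sup>2 / d\<^sup>2)"
    by (simp add: sum.distrib sum_subtractf sum_distrib_left d_def)
  finally show ?thesis
    using sum_l d_gt_1 by (simp add: power2_eq_square)
qed

definition fs :: "'n \<Rightarrow> real \<Rightarrow> real" where
  "fs i r = F i (t r)"

definition fs1 :: "'n \<Rightarrow> real \<Rightarrow> real" where
  "fs1 i r = c * P i (t r) * F i (t r)"

definition fs2 :: "'n \<Rightarrow> real \<Rightarrow> real" where
  "fs2 i r = c\<^sup>2 * (dP i (t r) * Ps (t r) + (P i (t r))\<^sup>2) * F i (t r)"

definition lam0 :: real where
  "lam0 = c\<^sup>2 * (k\<^sup>2 * al\<^sup>2 - be\<^sup>2) / d"

lemma has_real_derivative_fs:
  assumes r: "r \<in> {0..1}"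
  shows "(fs i has_real_derivative fs1 i r) (at r within {0..1})"
proof -
  have "((\<lambda>r. F i (t r)) has_real_derivative
      (F i (t r) * P i (t r) / Ps (t r)) * (c * Ps (t r))) (at r within {0..1})"
    by (rule DERIV_chain2[OF has_real_derivative_F[OF t_in_Icc[OF r]] has_real_derivative_t[OF r]])
  then show ?thesis
    using Ps_pos[OF t_in_Icc[OF r]] by (simp add: fs_def[abs_def] fs1_def field_simps)
qed

lemma has_real_derivative_fs1:
  assumes r: "r \<in> {0..1}"
  shows "(fs1 i has_real_derivative fs2 i r) (at r within {0..1})"
proof -
  have d_comp: "((\<lambda>\<tau>. c * P i \<tau> * F i \<tau>) has_real_derivative
      c * dP i (t r) * F i (t r) + (F i (t r) * P i (t r) / Ps (t r)) * (c * P i (t r))) (at (t r))"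
    by (rule DERIV_mult[OF DERIV_cmult[OF has_real_derivative_P] has_real_derivative_F[OF t_in_Icc[OF r]]])
  have "((\<lambda>r. c * P i (t r) * F i (t r)) has_real_derivative fs2 i r) (at r within {0..1})"
    by (rule DERIV_cong[OF DERIV_chain2[OF d_comp has_real_derivative_t[OF r]]])
      (use Ps_pos[OF t_in_Icc[OF r]] in \<open>simp add: fs2_def field_simps power2_eq_square\<close>)
  then show ?thesis
    by (simp add: fs1_def[abs_def])
qed

lemma continuous_on_fs2: "continuous_on {0..1} (fs2 i)"
proof -
  have "continuous_on {0..1} (\<lambda>\<tau>. c\<^sup>2 * (dP i \<tau> * Ps \<tau> + (P i \<tau>)\<^sup>2) * F i \<tau>)"
    unfolding dP_def P_def using d_gt_1 by (intro continuous_intros continuous_on_F) auto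
  then have "continuous_on {0..1} ((\<lambda>\<tau>. c\<^sup>2 * (dP i \<tau> * Ps \<tau> + (P i \<tau>)\<^sup>2) * F i \<tau>) \<circ> t)"
    by (rule continuous_on_compose[OF psi.continuous_on_t continuous_on_subset]) (auto intro: t_in_Icc)
  then show ?thesis
    by (simp add: fs2_def[abs_def] o_def)
qed

lemma fs1_div_fs: "fs1 i r / fs i r = c * P i (t r)"
  and fs2_div_fs: "fs2 i r / fs i r = c\<^sup>2 * (dP i (t r) * Ps (t r) + (P i (t r))\<^sup>2)"
  using F_pos[of i "t r"] by (simp_all add: fs_def fs1_def fs2_def)

lemma sum_fs1_div_fs: "(\<Sum>j\<in>UNIV. fs1 j r / fs j r) = - c * dPs (t r)"
  by (simp add: fs1_div_fs sum_P flip: sum_distrib_left)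

lemma lam0_eq: "lam0 = c\<^sup>2 * (k\<^sup>2 * (Ps \<tau>)\<^sup>2 - (dPs \<tau>)\<^sup>2) / d"
  by (simp add: Psi_energy lam0_def)

lemma einstein_sol_fs: "einstein_sol a b lam0 fs"
  unfolding einstein_sol_def
proof (intro exI conjI allI ballI)
  fix i
  show "C2_with_derivs (fs i) (fs1 i) (fs2 i)"
    unfolding C2_with_derivs_def using has_real_derivative_fs has_real_derivative_fs1 continuous_on_fs2
    by blast
  show "fs i 0 = a i"
    unfolding fs_def psi.t_0 by (simp add: F_def al_def)
  have "l i * 1 - (lnA + ln (Ps 1)) / d = ln (b i) - ln (a i)"
    using d_gt_1 by (simp add: Ps_1 l_def field_simps)
  then show "fs i 1 = b i"
    using a_pos[of i] b_pos[of i] by (simp add: fs_def F_def exp_diff)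
next
  fix i and r :: real
  show "fs i r > 0"
    by (simp add: fs_def F_pos)
  show "- (fs1 i r / fs i r) * (\<Sum>j\<in>UNIV. fs1 j r / fs j r) + (fs1 i r / fs i r)\<^sup>2
      - fs2 i r / fs i r = lam0"
    unfolding sum_fs1_div_fs unfolding fs1_div_fs fs2_div_fs lam0_eq[of "t r"]
    using d_gt_1 by (simp add: P_def dP_def field_simps power2_eq_square)
next
  have "(\<Sum>i\<in>UNIV. - (fs1 i 0 / fs i 0) * (\<Sum>j\<in>UNIV. fs1 j 0 / fs j 0) + (fs1 i 0 / fs i 0)\<^sup>2)
      = (\<Sum>i\<in>UNIV. c\<^sup>2 * dPs 0 * P i 0 + c\<^sup>2 * (P i 0)\<^sup>2)"
    unfolding sum_fs1_div_fs unfolding fs1_div_fs by (simp add: power2_eq_square algebra_simps)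
  also have "\<dots> = c\<^sup>2 * dPs 0 * (\<Sum>i\<in>UNIV. P i 0) + c\<^sup>2 * (\<Sum>i\<in>UNIV. (P i 0)\<^sup>2)"
    by (simp add: sum.distrib sum_distrib_left)
  also have "\<dots> = (d - 1) * (c\<^sup>2 * (k\<^sup>2 * (Ps 0)\<^sup>2 - (dPs 0)\<^sup>2) / d)"
    unfolding sum_P sum_P_square sum_l_square using d_gt_1 by (simp add: field_simps power2_eq_square)
  finally show "(\<Sum>i\<in>UNIV. - (fs1 i 0 / fs i 0) * (\<Sum>j\<in>UNIV. fs1 j 0 / fs j 0) + (fs1 i 0 / fs i 0)\<^sup>2)
      = (real CARD('n) - 1) * lam0"
    by (simp add: lam0_eq[of 0] d_def)
qed

lemma ln_fs: "r \<in> {0..1} \<Longrightarrow> ln (fs i r) = ln (a i) + l i * t r - (lnA + ln (Ps (t r))) / d"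
  using a_pos[of i] by (simp add: fs_def F_def ln_mult)

end

locale boundary_solution = boundary_data a b + sol: einstein_system g g1 g2 lam
  for a b :: "'n::finite \<Rightarrow> real" and g g1 g2 :: "'n \<Rightarrow> real \<Rightarrow> real" and lam :: real +
  assumes constraint: "(\<Sum>i\<in>UNIV. - (g1 i 0 / g i 0) * (\<Sum>k\<in>UNIV. g1 k 0 / g k 0) + (g1 i 0 / g i 0)\<^sup>2)
      = (real CARD('n) - 1) * lam"
    and g_0: "\<And>i. g i 0 = a i" and g_1: "\<And>i. g i 1 = b i"
begin

abbreviation T :: real where
  "T \<equiv> sol.vol.c"

abbreviation S0 :: real where
  "S0 \<equiv> sol.mean_curv 0"

lemma sol_d: "sol.d = d"
  by (simp add: sol.d_def d_def)

lemma T_pos: "T > 0"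
  by (rule sol.vol.c_pos)

lemma ln_vol_0: "ln (sol.vol 0) = lnA" and ln_vol_1: "ln (sol.vol 1) = lnB"
  by (simp_all add: sol.vol_def lnA_def lnB_def g_0 g_1)

lemma momentum_times_T: "sol.momentum i 0 * T = l i"
  using sol.ln_g_eq[of 1 i] by (simp add: g_0 g_1 ln_vol_0 ln_vol_1 sol_d l_def sol.vol.c_def)

lemma k_square_eq_energy: "k\<^sup>2 = T\<^sup>2 * sol.energy 0"
proof -
  have "(d - 1) / d * k\<^sup>2 = (\<Sum>i\<in>UNIV. (sol.momentum i 0 * T)\<^sup>2)"
    by (simp add: sum_l_square momentum_times_T)
  also have "\<dots> = T\<^sup>2 * (\<Sum>i\<in>UNIV. (sol.momentum i 0)\<^sup>2)"
    by (simp add: sum_distrib_left power_mult_distrib mult.commute)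
  also have "\<dots> = T\<^sup>2 * ((d - 1) / d * sol.energy 0)"
    using sol.hamiltonian_constraint constraint
    by (simp add: sol_d sol.logd_def sol.mean_curv_def d_def)
  finally show ?thesis
    using d_gt_1 by simp
qed

lemma inverse_vol_0: "1 / sol.vol 0 = al"
  by (simp add: al_def sol.vol_def lnA_def g_0 exp_minus inverse_eq_divide)

lemma be_eq: "- T * S0 = be"
proof -
  have "sol.vol 1 = exp lnB"
    by (simp add: sol.vol_def lnB_def g_1)
  moreover have "sol.vol.I 1 / T = 1"
    using T_pos by (simp add: sol.vol.c_def)
  ultimately have "exp lnB * (al * cosh k + (- T * S0) * scaled_sinh k 1) = 1"
    using sol.vol_times_Psi[OF k_square_eq_energy, of 1] by (simp add: Psi_def inverse_vol_0)
  then show ?thesis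
    using scaled_sinh_k_1_pos by (simp add: be_def exp_minus field_simps)
qed

lemma vol_times_Ps: "r \<in> {0..1} \<Longrightarrow> sol.vol r * Ps (sol.vol.I r / T) = 1"
  using sol.vol_times_Psi[OF k_square_eq_energy] unfolding inverse_vol_0 be_eq .

lemma reparametrization: "1 / T = c \<and> (\<forall>r\<in>{0..1}. sol.vol.I r / T = t r)"
proof (rule psi.ode_solution_eq_t)
  show "sol.vol.I r / T \<in> {0..1}" if "r \<in> {0..1}" for r
    using sol.vol.I_bounds[OF that] T_pos by simp
  show "sol.vol.I 0 / T = 0" "sol.vol.I 1 / T = 1"
    using T_pos by (simp_all add: sol.vol.c_def)
  show "((\<lambda>r. sol.vol.I r / T) has_real_derivative 1 / T / (1 / Ps (sol.vol.I r / T)))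
      (at r within {0..1})" if "r \<in> {0..1}" for r
    by (rule DERIV_cong[OF DERIV_cdivide[OF sol.vol.has_real_derivative_I[OF that]]])
      (use vol_times_Ps[OF that] sol.vol_pos[of r] T_pos in \<open>simp add: field_simps\<close>)
qed

lemma c_eq: "1 / T = c" and t_eq: "r \<in> {0..1} \<Longrightarrow> sol.vol.I r / T = t r"
  using reparametrization by blast+

lemma lam_eq_lam0: "lam = lam0"
proof -
  have "c\<^sup>2 * k\<^sup>2 * al\<^sup>2 = (1 / T)\<^sup>2 * (T\<^sup>2 * sol.energy 0) * (1 / sol.vol 0)\<^sup>2"
    by (simp only: c_eq k_square_eq_energy inverse_vol_0)
  also have "\<dots> = S0\<^sup>2 + d * lam"
    using T_pos sol.vol_pos[of 0] by (simp add: sol.energy_def sol_d field_simps power2_eq_square)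
  finally have "c\<^sup>2 * k\<^sup>2 * al\<^sup>2 = S0\<^sup>2 + d * lam" .
  moreover have "c\<^sup>2 * be\<^sup>2 = (1 / T)\<^sup>2 * (- T * S0)\<^sup>2"
    by (simp only: c_eq be_eq)
  then have "c\<^sup>2 * be\<^sup>2 = S0\<^sup>2"
    using T_pos by (simp add: field_simps power2_eq_square)
  ultimately show ?thesis
    using d_gt_1 by (simp add: lam0_def right_diff_distrib mult.assoc)
qed

lemma g_eq_fs:
  assumes r: "r \<in> {0..1}"
  shows "g i r = fs i r"
proof -
  have "sol.vol r * Ps (t r) = 1"
    using vol_times_Ps[OF r] by (simp add: t_eq[OF r])
  then have "ln (sol.vol r) + ln (Ps (t r)) = 0"
    using ln_mult_pos[OF sol.vol_pos Ps_pos[OF t_in_Icc[OF r]], of r] by simp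
  then have "ln (sol.vol r) = - ln (Ps (t r))"
    by linarith
  moreover have "sol.momentum i 0 * sol.vol.I r = l i * t r"
    using t_eq[OF r] T_pos momentum_times_T[of i] by (simp add: field_simps)
  ultimately have "ln (g i r) = ln (fs i r)"
    using sol.ln_g_eq[OF r, of i]
    by (simp add: ln_fs[OF r] g_0 ln_vol_0 sol_d diff_divide_distrib add_divide_distrib)
  then show ?thesis
    using sol.g_pos[OF r] F_pos by (simp add: fs_def)
qed

end

lemma (in boundary_data) einstein_sol_unique:
  assumes "einstein_sol a b lam' g"
  shows "lam' = lam0 \<and> (\<forall>i. \<forall>r\<in>{0..1}. g i r = fs i r)"
proof -
  obtain g1 g2 where sys: "einstein_system g g1 g2 lam'"
    and constraint: "(\<Sum>i\<in>UNIV. - (g1 i 0 / g i 0) * (\<Sum>k\<in>UNIV. g1 k 0 / g k 0) + (g1 i 0 / g i 0)\<^sup>2)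
      = (real CARD('n) - 1) * lam'"
    and bdry: "\<And>i. g i 0 = a i \<and> g i 1 = b i"
    using assms unfolding einstein_sol_def einstein_system_def by blast
  interpret boundary_solution a b g g1 g2 lam'
    by unfold_locales
      (use sys constraint bdry card_ge_2 a_pos b_pos in \<open>auto simp: einstein_system_def\<close>)
  show ?thesis
    using lam_eq_lam0 g_eq_fs by blast
qed

theorem theorem3p1:
  fixes a b :: "'n::finite \<Rightarrow> real"
  assumes "CARD('n) \<ge> 2"
    and "\<forall>i. a i > 0" and "\<forall>i. b i > 0"
  shows "\<exists>lam f. einstein_sol a b lam f \<and>
           (\<forall>lam' g. einstein_sol a b lam' g \<longrightarrow>
              lam' = lam \<and> (\<forall>i. \<forall>r\<in>{0..1}. g i r = f i r))"
proof -
  interpret boundary_data a b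
    by unfold_locales (use assms in auto)
  show ?thesis
    using einstein_sol_fs einstein_sol_unique by blast
qed

end
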